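(* Let $G$ be a finite group with $g_k(G)\geq N$, where $k\geq2$, and let $1\to C\to G\to G'\to1$ be an exact sequence with $C$ cyclic. Then $g_{k-1}(G')\geq N$.
   Context: For a finite group $G$ and positive integer $N$, $r_N(G)$ is the minimum number of generators among subgroups of $G$ of index at most $N$, and $g_k(G)=\max\{N : |G|\geq N \text{ and } r_N(G)\geq k\}$. *)

theory Defs
  imports "HOL-Algebra.Algebra"
begin

definition grank :: "('a, 'b) monoid_scheme \<Rightarrow> nat" where
  "grank H = (LEAST n. \<exists>S. S \<subseteq> carrier H \<and> finite S \<and> card S = n \<and> generate H S = carrier H)"

definition rN :: "nat \<Rightarrow> ('a, 'b) monoid_scheme \<Rightarrow> nat" where
  "rN N G = Min {grank (subgroup_generated G K) | K. subgroup K G \<and> card (rcosets\<^bsub>G\<^esub> K) \<le> N}"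

definition gk :: "nat \<Rightarrow> ('a, 'b) monoid_scheme \<Rightarrow> nat" where
  "gk k G = Max ({0} \<union> {N. 1 \<le> N \<and> N \<le> order G \<and> k \<le> rN N G})"

end

theory Submission
  imports Defs
begin

text \<open>Pulling back along the surjection \<open>h : G \<rightarrow> G'\<close> preserves the index of subgroups, and
  the preimage of a subgroup \<open>K'\<close> is generated by lifts of generators of \<open>K'\<close> together with one
  generator of the cyclic kernel. Hence \<open>r\<^sub>N(G) \<le> r\<^sub>N(G') + 1\<close>. Since \<open>r\<^sub>N\<close> is antitone in
  \<open>N\<close>, a witness \<open>M \<ge> N\<close> for \<open>g\<^sub>k(G) \<ge> N\<close> gives \<open>r\<^sub>N(G') \<ge> k - 1 \<ge> 1\<close>, which also forces
  \<open>N \<le> |G'|\<close> because \<open>r\<^sub>N\<close> vanishes once the trivial subgroup is admitted.\<close>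

lemma (in group) generate_subgroup_generated:
  assumes "subgroup K G" "T \<subseteq> K"
  shows "generate (subgroup_generated G K) T = generate G T"
proof -
  have "subgroup_generated G K = G\<lparr>carrier := K\<rparr>"
    using subgroup.carrier_subgroup_generated_subgroup[OF assms(1)]
    by (simp add: subgroup_generated_def carrier_subgroup_generated)
  then show ?thesis
    using generate_consistent[OF assms(2,1)] by simp
qed

lemma (in group) grank_le_card:
  assumes "subgroup K G" "T \<subseteq> K" "finite T" "generate G T = K"
  shows "grank (subgroup_generated G K) \<le> card T"
  unfolding grank_def
proof (rule Least_le, intro exI conjI)
  show "T \<subseteq> carrier (subgroup_generated G K)"
    using assms(1,2) subgroup.carrier_subgroup_generated_subgroup by blast
  show "generate (subgroup_generated G K) T = carrier (subgroup_generated G K)"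
    using assms generate_subgroup_generated
    by (simp add: subgroup.carrier_subgroup_generated_subgroup[OF assms(1)])
qed (use assms in auto)

lemma (in group) grank_generators:
  assumes "subgroup K G" "finite K"
  obtains S where "S \<subseteq> K" "finite S" "card S = grank (subgroup_generated G K)" "generate G S = K"
proof -
  let ?H = "subgroup_generated G K"
  have carrier_H: "carrier ?H = K"
    using assms(1) by (rule subgroup.carrier_subgroup_generated_subgroup)
  have "generate G K = K"
    using generate_subgroup_incl[OF order_refl assms(1)] generate.incl[of _ K G] by blast
  then have "generate ?H K = carrier ?H"
    using generate_subgroup_generated[OF assms(1) order_refl] carrier_H by simp
  then have "\<exists>S. S \<subseteq> carrier ?H \<and> finite S \<and> card S = card K \<and> generate ?H S = carrier ?H"
    using assms(2) carrier_H by auto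
  then have "\<exists>n S. S \<subseteq> carrier ?H \<and> finite S \<and> card S = n \<and> generate ?H S = carrier ?H"
    by blast
  then have "\<exists>S. S \<subseteq> carrier ?H \<and> finite S \<and> card S = grank ?H \<and> generate ?H S = carrier ?H"
    unfolding grank_def by (rule LeastI_ex)
  then show ?thesis
    using that carrier_H generate_subgroup_generated[OF assms(1)] by auto
qed

lemma (in group_hom) subgroup_vimage:
  assumes "subgroup K H"
  shows "subgroup (carrier G \<inter> h -` K) G"
proof (rule G.subgroupI)
  show "carrier G \<inter> h -` K \<noteq> {}"
    using subgroup.one_closed[OF assms] by auto
qed (auto simp: subgroup.m_inv_closed[OF assms] subgroup.m_closed[OF assms])

lemma (in group_hom) vimage_singleton_eq_rcoset:
  assumes "x \<in> carrier G"
  shows "carrier G \<inter> h -` {h x} = kernel G H h #> x"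
proof (intro equalityI subsetI)
  fix z assume z: "z \<in> carrier G \<inter> h -` {h x}"
  then have "z \<otimes> inv x \<in> kernel G H h"
    using assms by (simp add: kernel_def)
  moreover have "z = (z \<otimes> inv x) \<otimes> x"
    using z assms by (simp add: G.m_assoc)
  ultimately show "z \<in> kernel G H h #> x"
    unfolding r_coset_def by blast
qed (use assms in \<open>auto simp: r_coset_def kernel_def\<close>)

lemma (in group_hom) card_vimage:
  assumes "finite (carrier G)" and "A \<subseteq> h ` carrier G"
  shows "card (carrier G \<inter> h -` A) = card A * card (kernel G H h)"
proof -
  have "finite A"
    using assms finite_subset by blast
  have "card (carrier G \<inter> h -` A) = card (\<Union>y\<in>A. carrier G \<inter> h -` {y})"
    by (rule arg_cong[where f = card]) auto
  also have "\<dots> = (\<Sum>y\<in>A. card (carrier G \<inter> h -` {y}))"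
    by (rule card_UN_disjoint) (use \<open>finite A\<close> assms(1) in auto)
  also have "\<dots> = (\<Sum>y\<in>A. card (kernel G H h))"
  proof (rule sum.cong)
    fix y assume "y \<in> A"
    then obtain x where x: "x \<in> carrier G" "y = h x"
      using assms(2) by blast
    have "kernel G H h #> x \<in> rcosets kernel G H h"
      using x(1) by (auto simp: RCOSETS_def)
    then show "card (carrier G \<inter> h -` {y}) = card (kernel G H h)"
      using x vimage_singleton_eq_rcoset G.card_rcosets_equal subgroup.subset[OF subgroup_kernel]
      by metis
  qed simp
  finally show ?thesis
    by simp
qed

lemma (in group_hom) index_vimage:
  assumes "finite (carrier G)" and surj: "h ` carrier G = carrier H" and "subgroup K H"
  shows "card (rcosets (carrier G \<inter> h -` K)) = card (rcosets\<^bsub>H\<^esub> K)"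
proof -
  let ?K = "carrier G \<inter> h -` K" and ?c = "card (kernel G H h)"
  have "finite (carrier H)"
    using assms(1) surj by (metis finite_imageI)
  have "subgroup ?K G"
    using assms(3) by (rule subgroup_vimage)
  then have "card ?K > 0"
    using assms(1) subgroup.one_closed subgroup.subset by (metis card_gt_0_iff empty_iff finite_subset)
  have "card (rcosets ?K) * card ?K = order G"
    using G.lagrange_finite[OF assms(1) \<open>subgroup ?K G\<close>] .
  also have "\<dots> = order H * ?c"
    using card_vimage[OF assms(1), of "carrier H"] surj by (simp add: order_def Int_absorb2 subset_vimage_iff)
  also have "\<dots> = card (rcosets\<^bsub>H\<^esub> K) * card K * ?c"
    using H.lagrange_finite[OF \<open>finite (carrier H)\<close> assms(3)] by simp
  also have "\<dots> = card (rcosets\<^bsub>H\<^esub> K) * card ?K"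
    using card_vimage[OF assms(1)] subgroup.subset[OF assms(3)] surj by simp
  finally show ?thesis
    using \<open>card ?K > 0\<close> by simp
qed

lemma (in group) cyclic_subgroup_generator:
  assumes "subgroup K G" and "cyclic_group (subgroup_generated G K)"
  obtains c where "c \<in> K" and "generate G {c} = K"
proof -
  have carrier_K: "carrier (subgroup_generated G K) = K"
    using assms(1) by (rule subgroup.carrier_subgroup_generated_subgroup)
  obtain c where c: "c \<in> K"
    and gen_c: "subgroup_generated (subgroup_generated G K) {c} = subgroup_generated G K"
    using assms(2) carrier_K unfolding cyclic_group_def by blast
  have "generate (subgroup_generated G K) {c} = K"
    using arg_cong[OF gen_c, of carrier] c carrier_K
    by (simp add: carrier_subgroup_generated Int_absorb1)
  then show thesis
    using that c generate_subgroup_generated[OF assms(1)] by simp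
qed

lemma (in group_hom) vimage_generate_subset:
  assumes "S \<subseteq> T" and "T \<subseteq> carrier G" and "kernel G H h \<subseteq> generate G T"
  shows "carrier G \<inter> h -` generate H (h ` S) \<subseteq> generate G T"
proof
  fix x assume x: "x \<in> carrier G \<inter> h -` generate H (h ` S)"
  then have "h x \<in> h ` generate G S"
    using generate_img assms(1,2) by (metis IntD2 order_trans vimageD)
  then obtain y where y: "y \<in> generate G S" and "h y = h x"
    by (metis imageE)
  have "y \<in> carrier G"
    using y assms(1,2) G.generate_in_carrier by blast
  with x \<open>h y = h x\<close> have "inv y \<otimes> x \<in> kernel G H h"
    by (simp add: kernel_def)
  moreover have "y \<in> generate G T"
    using y G.mono_generate[OF assms(1)] by blast
  ultimately have "y \<otimes> (inv y \<otimes> x) \<in> generate G T"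
    using assms(3) subgroup.m_closed[OF G.generate_is_subgroup[OF assms(2)]] by blast
  then show "x \<in> generate G T"
    using x \<open>y \<in> carrier G\<close> by (simp add: G.m_assoc[symmetric])
qed

lemma (in group_hom) grank_vimage_le:
  assumes "finite (carrier G)" and surj: "h ` carrier G = carrier H" and "subgroup K H"
    and "cyclic_group (subgroup_generated G (kernel G H h))"
  shows "grank (subgroup_generated G (carrier G \<inter> h -` K)) \<le> grank (subgroup_generated H K) + 1"
proof -
  let ?K = "carrier G \<inter> h -` K"
  obtain c where "c \<in> kernel G H h" and gen_c: "generate G {c} = kernel G H h"
    using G.cyclic_subgroup_generator[OF subgroup_kernel assms(4)] .
  have "finite K"
    using assms(1) surj subgroup.subset[OF assms(3)] by (metis finite_imageI finite_subset)
  then obtain S' where S': "S' \<subseteq> K" "finite S'" "card S' = grank (subgroup_generated H K)"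
    and gen_S': "generate H S' = K"
    using H.grank_generators[OF assms(3)] by blast
  then have "S' \<subseteq> h ` carrier G"
    using surj subgroup.subset[OF assms(3)] by blast
  then obtain S where S: "S \<subseteq> carrier G" "inj_on h S" and "S' = h ` S"
    by (auto simp: subset_image_inj)
  define T where "T = insert c S"
  have "T \<subseteq> ?K"
    using S(1) \<open>S' = h ` S\<close> S'(1) \<open>c \<in> kernel G H h\<close> subgroup.one_closed[OF assms(3)]
    by (auto simp: T_def kernel_def)
  have "finite T" and "card T \<le> card S' + 1"
    using S'(2) S(2) \<open>S' = h ` S\<close> by (auto simp: T_def card_insert_if card_image finite_image_iff)
  have "generate G T = ?K"
  proof
    show "generate G T \<subseteq> ?K"
      using G.generate_subgroup_incl[OF \<open>T \<subseteq> ?K\<close> subgroup_vimage[OF assms(3)]] .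
    have "kernel G H h \<subseteq> generate G T"
      using gen_c G.mono_generate[of "{c}" T] by (auto simp: T_def)
    then show "?K \<subseteq> generate G T"
      using vimage_generate_subset[of S T] gen_S' \<open>S' = h ` S\<close> \<open>T \<subseteq> ?K\<close>
      by (auto simp: T_def)
  qed
  then have "grank (subgroup_generated G ?K) \<le> card T"
    using G.grank_le_card[OF subgroup_vimage[OF assms(3)] \<open>T \<subseteq> ?K\<close> \<open>finite T\<close>] by blast
  then show ?thesis
    using \<open>card T \<le> card S' + 1\<close> S'(3) by linarith
qed

lemma finite_granks:
  assumes "finite (carrier G)"
  shows "finite {grank (subgroup_generated G K) | K. subgroup K G \<and> P K}"
proof -
  have "{grank (subgroup_generated G K) | K. subgroup K G \<and> P K}
        \<subseteq> (\<lambda>K. grank (subgroup_generated G K)) ` Pow (carrier G)"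
    using subgroup.subset by blast
  then show ?thesis
    using assms by (meson finite_Pow_iff finite_imageI finite_subset)
qed

lemma rN_le_grank:
  assumes "finite (carrier G)" and "subgroup K G" and "card (rcosets\<^bsub>G\<^esub> K) \<le> N"
  shows "rN N G \<le> grank (subgroup_generated G K)"
  unfolding rN_def by (rule Min_le[OF finite_granks[OF assms(1)]]) (use assms in blast)

lemma (in group) rN_attained:
  assumes "finite (carrier G)" and "0 < N"
  obtains K where "subgroup K G" and "card (rcosets K) \<le> N"
    and "rN N G = grank (subgroup_generated G K)"
proof -
  let ?R = "{grank (subgroup_generated G K) | K. subgroup K G \<and> card (rcosets K) \<le> N}"
  have "card (rcosets (carrier G)) * order G = order G"
    using lagrange[OF subgroup_self] by (simp add: order_def)
  moreover have "0 < order G"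
    using assms(1) order_gt_0_iff_finite by blast
  ultimately have "card (rcosets (carrier G)) \<le> N"
    using assms(2) by simp
  then have "?R \<noteq> {}"
    using subgroup_self by blast
  then have "rN N G \<in> ?R"
    unfolding rN_def by (rule Min_in[OF finite_granks[OF assms(1)]])
  then obtain K where "subgroup K G" "card (rcosets K) \<le> N" "rN N G = grank (subgroup_generated G K)"
    by blast
  then show thesis
    by (rule that)
qed

lemma (in group) rN_antimono:
  assumes "finite (carrier G)" and "0 < N" and "N \<le> M"
  shows "rN M G \<le> rN N G"
proof -
  obtain K where "subgroup K G" "card (rcosets K) \<le> N" "rN N G = grank (subgroup_generated G K)"
    using rN_attained[OF assms(1,2)] .
  then show ?thesis
    using rN_le_grank[OF assms(1)] assms(3) by (metis order_trans)
qed

lemma (in group) rN_eq_0: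
  assumes "finite (carrier G)" and "order G \<le> N"
  shows "rN N G = 0"
proof -
  have "grank (subgroup_generated G {\<one>}) \<le> card ({} :: 'a set)"
    by (rule grank_le_card[OF triv_subgroup]) (simp_all add: generate_empty)
  then show ?thesis
    using rN_le_grank[OF assms(1) triv_subgroup] card_rcosets_triv[OF assms(1)] assms(2) by simp
qed

lemma (in group_hom) rN_le_rN_image:
  assumes "finite (carrier G)" and surj: "h ` carrier G = carrier H"
    and "cyclic_group (subgroup_generated G (kernel G H h))" and "0 < N"
  shows "rN N G \<le> rN N H + 1"
proof -
  have "finite (carrier H)"
    using assms(1) surj by (metis finite_imageI)
  then obtain K where K: "subgroup K H" "card (rcosets\<^bsub>H\<^esub> K) \<le> N"
    and "rN N H = grank (subgroup_generated H K)"
    using H.rN_attained assms(4) by blast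
  have "rN N G \<le> grank (subgroup_generated G (carrier G \<inter> h -` K))"
    using rN_le_grank[OF assms(1) subgroup_vimage] index_vimage[OF assms(1) surj] K by simp
  also have "\<dots> \<le> rN N H + 1"
    using grank_vimage_le[OF assms(1) surj K(1) assms(3)] \<open>rN N H = _\<close> by simp
  finally show ?thesis .
qed

lemma le_gk_iff:
  assumes "0 < N"
  shows "N \<le> gk k G \<longleftrightarrow> (\<exists>M\<ge>N. M \<le> order G \<and> k \<le> rN M G)"
proof -
  let ?A = "{M. 1 \<le> M \<and> M \<le> order G \<and> k \<le> rN M G}"
  have "finite ({0} \<union> ?A)"
    by (rule finite_subset[of _ "{..order G}"]) auto
  then have "N \<le> Max ({0} \<union> ?A) \<longleftrightarrow> (\<exists>M\<in>{0} \<union> ?A. N \<le> M)"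
    by (simp add: Max_ge_iff)
  also have "\<dots> \<longleftrightarrow> (\<exists>M\<ge>N. M \<le> order G \<and> k \<le> rN M G)"
  proof
    assume "\<exists>M\<in>{0} \<union> ?A. N \<le> M"
    then obtain M where "M \<in> ?A" and "N \<le> M"
      using assms by auto
    then show "\<exists>M\<ge>N. M \<le> order G \<and> k \<le> rN M G"
      by auto
  next
    assume "\<exists>M\<ge>N. M \<le> order G \<and> k \<le> rN M G"
    then obtain M where "N \<le> M" and "M \<in> ?A"
      using assms by auto
    then show "\<exists>M\<in>{0} \<union> ?A. N \<le> M"
      by blast
  qed
  finally show ?thesis
    unfolding gk_def .
qed

theorem mainTheorem14:
  fixes G :: "('a, 'b) monoid_scheme" and G' :: "('c, 'd) monoid_scheme"
    and h :: "'a \<Rightarrow> 'c" and k N :: nat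
  assumes "group G" and "finite (carrier G)" and "group G'"
    and "h \<in> hom G G'" and "h ` carrier G = carrier G'"
    and "cyclic_group (subgroup_generated G (kernel G G' h))"
    and "k \<ge> 2" and "gk k G \<ge> N"
  shows "gk (k - 1) G' \<ge> N"
proof (cases "N = 0")
  case False
  interpret group_hom G G' h
    using assms(1,3,4) by (simp add: group_hom_def group_hom_axioms_def)
  have "finite (carrier G')"
    using assms(2,5) by (metis finite_imageI)
  obtain M where "N \<le> M" and "k \<le> rN M G"
    using assms(8) False le_gk_iff[of N k G] by auto
  note \<open>k \<le> rN M G\<close>
  also have "rN M G \<le> rN N G"
    using G.rN_antimono assms(2) False \<open>N \<le> M\<close> by simp
  also have "rN N G \<le> rN N G' + 1"
    using rN_le_rN_image assms(2,5,6) False by simp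
  finally have "k \<le> rN N G' + 1" .
  moreover have "N \<le> order G'"
  proof (rule ccontr)
    assume "\<not> N \<le> order G'"
    then have "rN N G' = 0"
      using H.rN_eq_0 \<open>finite (carrier G')\<close> by simp
    with \<open>k \<le> rN N G' + 1\<close> assms(7) show False
      by simp
  qed
  moreover have "k - 1 \<le> rN N G'"
    using \<open>k \<le> rN N G' + 1\<close> by simp
  ultimately show ?thesis
    using le_gk_iff[of N "k - 1" G'] False order_refl by blast
qed simp

end
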